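(* Consider the network with vertices $s_1,s_2,s_3,t$ and directed edges $(s_3,s_1),(s_3,s_2),(s_1,t),(s_2,t)$, where $\mathcal{A}=\mathcal{Z}=\{0,1\}$, the messages $X_1^k,X_2^k,X_3^k$ have all components i.i.d. uniform on $\{0,1\}$, and the demand function is the arithmetic sum $f(X_1,X_2,X_3)=X_1+X_2+X_3\in\{0,1,2,3\}$ over the integers. Then every admissible rate tuple $(R_{31},R_{32},R_1,R_2)$ satisfies $R_1\ge1$, $R_2\ge1$, and $$\frac{R_1+R_2}{2}\ \ge\ \frac{0.5+3-0.75\log_2 3}{2}\approx\frac{2.31128}{2}.$$
   Context: A source-network code $\mathcal{C}_{f,k}$ consists of encoders $\phi_{(s_3,s_1)},\phi_{(s_3,s_2)}:\mathcal{A}^k\to\mathcal{Z}^*$, $\phi_{(s_1,t)},\phi_{(s_2,t)}:\mathcal{A}^k\times\mathcal{Z}^*\to\mathcal{Z}^*$ ($\mathcal{Z}^*$ = finite binary sequences) and a decoder $\psi_t:\mathcal{Z}^*\times\mathcal{Z}^*\to\{0,1,2,3\}^k$; $\mathbf{Z}_{31}=\phi_{(s_3,s_1)}(X_3^k)$, $\mathbf{Z}_{32}=\phi_{(s_3,s_2)}(X_3^k)$, $\mathbf{Z}_1=\phi_{(s_1,t)}(X_1^k,\mathbf{Z}_{31})$, $\mathbf{Z}_2=\phi_{(s_2,t)}(X_2^k,\mathbf{Z}_{32})$, and $\Pr\{\psi_t(\mathbf{Z}_1,\mathbf{Z}_2)\ne f(X_1^k,X_2^k,X_3^k)\}=0$,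 with $f$ applied componentwise. A tuple $(R_{31},R_{32},R_1,R_2)$ is admissible if for every $\epsilon>0$ there exist a sufficiently large $k$ and such a code with $\log|\mathcal{Z}|\,\mathbb{E}\ell(\mathbf{Z}_e)\le k\log|\mathcal{A}|(R_e+\epsilon)$ for each $e\in\{31,32,1,2\}$, where $\ell$ denotes length in symbols of $\mathcal{Z}$. *)

theory Defs
  imports Complex_Main
begin

text \<open>Source alphabet A = Z = {0,1} is rendered as bool; finite sequences over Z
  (the set Z^*) as bool list; a message block X^k as a bool list of length k.\<close>

definition msgs :: "nat \<Rightarrow> bool list set" where
  "msgs k = {xs. length xs = k}"

text \<open>All message triples (X_1^k, X_2^k, X_3^k); since the components are i.i.d. uniform,
  the joint distribution is uniform on this finite set.\<close>
definition triples :: "nat \<Rightarrow> (bool list \<times> bool list \<times> bool list) set" where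
  "triples k = msgs k \<times> msgs k \<times> msgs k"

definition sum_demand :: "bool list \<Rightarrow> bool list \<Rightarrow> bool list \<Rightarrow> nat list" where
  "sum_demand x1 x2 x3 = map (\<lambda>(a, b, c). of_bool a + of_bool b + of_bool c) (zip x1 (zip x2 x3))"

definition prob_uniform :: "nat \<Rightarrow> (bool list \<times> bool list \<times> bool list \<Rightarrow> bool) \<Rightarrow> real" where
  "prob_uniform k P = real (card {x \<in> triples k. P x}) / real (card (triples k))"

definition expect_uniform :: "nat \<Rightarrow> (bool list \<times> bool list \<times> bool list \<Rightarrow> real) \<Rightarrow> real" where
  "expect_uniform k g = (\<Sum>x\<in>triples k. g x) / real (card (triples k))"

definition zero_error_code ::
  "nat \<Rightarrow> (bool list \<Rightarrow> bool list) \<Rightarrow> (bool list \<Rightarrow> bool list)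
   \<Rightarrow> (bool list \<Rightarrow> bool list \<Rightarrow> bool list) \<Rightarrow> (bool list \<Rightarrow> bool list \<Rightarrow> bool list)
   \<Rightarrow> (bool list \<Rightarrow> bool list \<Rightarrow> nat list) \<Rightarrow> bool" where
  "zero_error_code k e31 e32 e1 e2 dec \<longleftrightarrow>
     prob_uniform k (\<lambda>(x1, x2, x3). dec (e1 x1 (e31 x3)) (e2 x2 (e32 x3)) \<noteq> sum_demand x1 x2 x3) = 0"

text \<open>Admissibility; |A| = |Z| = 2, logs kept literally (natural log, base irrelevant).\<close>
definition admissible :: "real \<Rightarrow> real \<Rightarrow> real \<Rightarrow> real \<Rightarrow> bool" where
  "admissible R31 R32 R1 R2 \<longleftrightarrow>
    (\<forall>\<epsilon>>0. \<forall>K. \<exists>k\<ge>K. \<exists>e31 e32 e1 e2 dec.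
       zero_error_code k e31 e32 e1 e2 dec \<and>
       ln 2 * expect_uniform k (\<lambda>(x1, x2, x3). real (length (e31 x3))) \<le> real k * ln 2 * (R31 + \<epsilon>) \<and>
       ln 2 * expect_uniform k (\<lambda>(x1, x2, x3). real (length (e32 x3))) \<le> real k * ln 2 * (R32 + \<epsilon>) \<and>
       ln 2 * expect_uniform k (\<lambda>(x1, x2, x3). real (length (e1 x1 (e31 x3)))) \<le> real k * ln 2 * (R1 + \<epsilon>) \<and>
       ln 2 * expect_uniform k (\<lambda>(x1, x2, x3). real (length (e2 x2 (e32 x3)))) \<le> real k * ln 2 * (R2 + \<epsilon>))"

end

theory Submission
  imports Defs
begin

(* For 0 < a < 1/2 the weights w(z) = (1 - 2a) a^|z| have total mass at most 1 on any set of
   binary strings; they replace Kraft's inequality for codes that need not be prefix-free.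
   With X3 fixed each encoder is injective, hence w(Z1) / 4^k is a sub-probability on message
   triples, and Gibbs' inequality against the uniform distribution (entropy 3k bits) gives
   k + log(1 - 2a) <= -log a * E l(Z1).  For the sum rate, zero error means that (Z1, Z2)
   determines S = X1 + X2 + X3, so w(Z1) w(Z2) P(X3 | S) is a sub-probability as well; its cross
   entropy additionally pays H(X3 | S) = k (3/4 log 3 - 1/2) bits, which leaves
   k (7/2 - 3/4 log 3) <= -log a * (E l(Z1) + E l(Z2)) + O(1).  Dividing by k and letting a tend
   to 1/2 gives the rate bounds; R2 >= 1 is R1 >= 1 for the code with X1 and X2 interchanged. *)

lemma card_ln_card_le_sum_neg_ln:
  fixes Q :: "'a \<Rightarrow> real"
  assumes "finite T" and pos: "\<And>x. x \<in> T \<Longrightarrow> 0 < Q x" and "sum Q T \<le> 1"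
  shows "card T * ln (card T) \<le> (\<Sum>x\<in>T. - ln (Q x))"
proof (cases "T = {}")
  case False
  let ?N = "real (card T)"
  have N: "0 < ?N" using False \<open>finite T\<close> by (simp add: card_gt_0_iff)
  have "(\<Sum>x\<in>T. ln ?N + ln (Q x)) \<le> (\<Sum>x\<in>T. ?N * Q x - 1)"
  proof (rule sum_mono)
    fix x assume "x \<in> T"
    then have "ln (?N * Q x) \<le> ?N * Q x - 1" using N pos by (intro ln_le_minus_one) simp
    then show "ln ?N + ln (Q x) \<le> ?N * Q x - 1" using N pos[OF \<open>x \<in> T\<close>] by (simp add: ln_mult)
  qed
  also have "\<dots> = ?N * sum Q T - ?N" by (simp add: sum_subtractf sum_distrib_left)
  also have "\<dots> \<le> 0" using N \<open>sum Q T \<le> 1\<close> by (simp add: mult_le_cancel_left1)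
  finally show ?thesis by (simp add: sum.distrib sum_negf)
qed simp

lemma sum_comp_inj_le:
  fixes P :: "'b \<Rightarrow> real"
  assumes "inj_on g T" "g ` T \<subseteq> S" "finite S" "\<And>y. y \<in> S \<Longrightarrow> 0 \<le> P y"
  shows "(\<Sum>x\<in>T. P (g x)) \<le> sum P S"
proof -
  have "(\<Sum>x\<in>T. P (g x)) = sum P (g ` T)" by (simp add: sum.reindex[OF assms(1)])
  also have "\<dots> \<le> sum P S" by (rule sum_mono2) (use assms in auto)
  finally show ?thesis .
qed

lemma finite_msgs: "finite (msgs k)"
  using finite_lists_length_eq[of "UNIV :: bool set" k] by (simp add: msgs_def)

lemma card_msgs: "card (msgs k) = 2 ^ k"
  using card_lists_length_eq[of "UNIV :: bool set" k] by (simp add: msgs_def)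

lemma sum_msgs_Suc:
  "(\<Sum>xs\<in>msgs (Suc k). f xs) = (\<Sum>xs\<in>msgs k. f (True # xs)) + (\<Sum>xs\<in>msgs k. f (False # xs))"
proof -
  have "msgs (Suc k) = Cons True ` msgs k \<union> Cons False ` msgs k"
    by (auto simp: msgs_def length_Suc_conv image_iff)
  also have "sum f \<dots> = (\<Sum>xs\<in>msgs k. f (True # xs)) + (\<Sum>xs\<in>msgs k. f (False # xs))"
    by (subst sum.union_disjoint) (auto simp: finite_msgs sum.reindex)
  finally show ?thesis .
qed

lemma finite_triples: "finite (triples k)"
  by (simp add: triples_def finite_msgs)

lemma card_triples: "card (triples k) = 8 ^ k"
  by (simp add: triples_def card_msgs card_cartesian_product flip: power_mult_distrib)

lemma sum_triples: "(\<Sum>x\<in>triples k. F x) = (\<Sum>x1\<in>msgs k. \<Sum>x2\<in>msgs k. \<Sum>x3\<in>msgs k. F (x1, x2, x3))"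
  by (simp add: triples_def sum.cartesian_product)

lemma sum_triples_Suc:
  "(\<Sum>x\<in>triples (Suc k). F x) = (\<Sum>a\<in>UNIV. \<Sum>b\<in>UNIV. \<Sum>c\<in>UNIV.
     \<Sum>(x1, x2, x3)\<in>triples k. F (a # x1, b # x2, c # x3))"
  by (simp add: sum_triples sum_msgs_Suc sum.distrib UNIV_bool ac_simps)

definition length_weight :: "real \<Rightarrow> bool list \<Rightarrow> real" where
  "length_weight a z = (1 - 2 * a) * a ^ length z"

lemma length_weight_pos: "0 < a \<Longrightarrow> a < 1/2 \<Longrightarrow> 0 < length_weight a z"
  by (simp add: length_weight_def)

lemma ln_length_weight:
  "0 < a \<Longrightarrow> a < 1/2 \<Longrightarrow> ln (length_weight a z) = ln (1 - 2 * a) + length z * ln a"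
  by (simp add: length_weight_def ln_mult ln_realpow)

lemma sum_length_weight_le_1:
  assumes "finite Z" "0 < a" "a < 1/2"
  shows "(\<Sum>z\<in>Z. length_weight a z) \<le> 1"
proof -
  obtain M where M: "\<forall>z\<in>Z. length z \<le> M"
    using finite_nat_set_iff_bounded_le[of "length ` Z"] assms(1) by auto
  then have "Z \<subseteq> (\<Union>n\<le>M. msgs n)" by (auto simp: msgs_def)
  then have "(\<Sum>z\<in>Z. length_weight a z) \<le> (\<Sum>z\<in>(\<Union>n\<le>M. msgs n). length_weight a z)"
    using assms by (intro sum_mono2) (auto simp: finite_msgs length_weight_def)
  also have "\<dots> = (\<Sum>n\<le>M. \<Sum>z\<in>msgs n. length_weight a z)"
    by (rule sum.UNION_disjoint) (simp_all add: finite_msgs, auto simp: msgs_def)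
  also have "\<dots> = (1 - 2 * a) * (\<Sum>n<Suc M. (2 * a) ^ n)"
    by (simp add: length_weight_def msgs_def card_msgs[unfolded msgs_def] power_mult_distrib
        sum_distrib_left lessThan_Suc_atMost mult_ac)
  also have "\<dots> = 1 - (2 * a) ^ Suc M"
    using assms by (simp only: sum_gp_strict) (auto simp: field_simps)
  also have "\<dots> \<le> 1" using assms by simp
  finally show ?thesis .
qed

lemma expect_uniform_cong:
  "(\<And>x. x \<in> triples k \<Longrightarrow> f x = g x) \<Longrightarrow> expect_uniform k f = expect_uniform k g"
  by (simp add: expect_uniform_def)

lemma expect_uniform_const [simp]: "expect_uniform k (\<lambda>_. c) = c"
  by (simp add: expect_uniform_def card_triples)

lemma expect_uniform_add:
  "expect_uniform k (\<lambda>x. f x + g x) = expect_uniform k f + expect_uniform k g"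
  by (simp add: expect_uniform_def sum.distrib add_divide_distrib)

lemma expect_uniform_diff:
  "expect_uniform k (\<lambda>x. f x - g x) = expect_uniform k f - expect_uniform k g"
  by (simp add: expect_uniform_def sum_subtractf diff_divide_distrib)

lemma expect_uniform_cmult: "expect_uniform k (\<lambda>x. c * f x) = c * expect_uniform k f"
  by (simp add: expect_uniform_def sum_distrib_left)

lemma expect_uniform_swap12:
  "expect_uniform k (\<lambda>(x1, x2, x3). f x2 x1 x3) = expect_uniform k (\<lambda>(x1, x2, x3). f x1 x2 x3)"
  unfolding expect_uniform_def sum_triples by (subst sum.swap) simp

lemma uniform_entropy_le_expect_neg_ln:
  assumes "\<And>x. x \<in> triples k \<Longrightarrow> 0 < Q x" and "sum Q (triples k) \<le> 1"
  shows "3 * real k * ln 2 \<le> expect_uniform k (\<lambda>x. - ln (Q x))"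
proof -
  have "ln (8 :: real) = 3 * ln 2" using ln_realpow[of 2 3] by simp
  then have "ln (card (triples k)) = 3 * real k * ln 2" by (simp add: card_triples ln_realpow)
  then have "8 ^ k * (3 * real k * ln 2) \<le> (\<Sum>x\<in>triples k. - ln (Q x))"
    using card_ln_card_le_sum_neg_ln[OF finite_triples assms] by (simp add: card_triples)
  then show ?thesis by (simp add: expect_uniform_def card_triples pos_le_divide_eq mult.commute)
qed

lemma prob_uniform_eq_0_iff: "prob_uniform k P = 0 \<longleftrightarrow> (\<forall>x\<in>triples k. \<not> P x)"
  using finite_triples[of k] by (auto simp: prob_uniform_def card_triples)

lemma zero_error_code_iff:
  "zero_error_code k e31 e32 e1 e2 dec \<longleftrightarrow>
    (\<forall>x1\<in>msgs k. \<forall>x2\<in>msgs k. \<forall>x3\<in>msgs k.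
       dec (e1 x1 (e31 x3)) (e2 x2 (e32 x3)) = sum_demand x1 x2 x3)"
  by (auto simp: zero_error_code_def prob_uniform_eq_0_iff triples_def)

lemma sum_demand_Cons [simp]:
  "sum_demand (a # x1) (b # x2) (c # x3)
    = (of_bool a + of_bool b + of_bool c) # sum_demand x1 x2 x3"
  by (simp add: sum_demand_def)

lemma sum_demand_commute: "sum_demand x1 x2 x3 = sum_demand x2 x1 x3"
  by (auto simp: sum_demand_def intro!: nth_equalityI)

lemma sum_demand_inj_left:
  assumes "length x = length y" "length x2 = length x" "length x3 = length x"
    and "sum_demand x x2 x3 = sum_demand y x2 x3"
  shows "x = y"
  using assms
proof (induction x arbitrary: y x2 x3)
  case (Cons a x)
  then obtain b y' c x2' d x3' where "y = b # y'" "x2 = c # x2'" "x3 = d # x3'"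
    by (metis length_Suc_conv)
  with Cons show ?case by (cases a; cases b) auto
qed simp

lemma zero_error_code_swap:
  "zero_error_code k e31 e32 e1 e2 dec \<Longrightarrow> zero_error_code k e32 e31 e2 e1 (\<lambda>z1 z2. dec z2 z1)"
  by (simp add: zero_error_code_iff) (metis sum_demand_commute)

lemma zero_error_code_inj1:
  assumes "zero_error_code k e31 e32 e1 e2 dec" "x3 \<in> msgs k"
  shows "inj_on (\<lambda>x1. e1 x1 (e31 x3)) (msgs k)"
proof (rule inj_onI)
  fix x y assume "x \<in> msgs k" "y \<in> msgs k" "e1 x (e31 x3) = e1 y (e31 x3)"
  with assms have "sum_demand x x3 x3 = sum_demand y x3 x3"
    by (metis zero_error_code_iff)
  with \<open>x \<in> msgs k\<close> \<open>y \<in> msgs k\<close> \<open>x3 \<in> msgs k\<close> show "x = y"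
    by (intro sum_demand_inj_left) (auto simp: msgs_def)
qed

lemma zero_error_code_inj2:
  "zero_error_code k e31 e32 e1 e2 dec \<Longrightarrow> x3 \<in> msgs k \<Longrightarrow> inj_on (\<lambda>x2. e2 x2 (e32 x3)) (msgs k)"
  by (rule zero_error_code_inj1[OF zero_error_code_swap])

lemma admissibleD:
  assumes "admissible R31 R32 R1 R2" "0 < \<epsilon>"
  obtains k e31 e32 e1 e2 dec where "K \<le> k" "zero_error_code k e31 e32 e1 e2 dec"
    "expect_uniform k (\<lambda>(x1, x2, x3). real (length (e1 x1 (e31 x3)))) \<le> k * (R1 + \<epsilon>)"
    "expect_uniform k (\<lambda>(x1, x2, x3). real (length (e2 x2 (e32 x3)))) \<le> k * (R2 + \<epsilon>)"
  using assms unfolding admissible_def by (simp add: mult.assoc) blast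

lemma admissible_swap:
  assumes "admissible R31 R32 R1 R2"
  shows "admissible R32 R31 R2 R1"
  using assms zero_error_code_swap unfolding admissible_def
  by (simp only: expect_uniform_swap12[where f = "\<lambda>x1 x2 x3. real (length (e x1 (e' x3)))"
      for e e']) blast

(* P(X3 = c | X1 + X2 + X3 = s) for a single coordinate: by symmetry X3 = 1 with probability s/3.
   Its product over the coordinates, cond_prob, is the conditional law of X3^k given the demand. *)
definition cond_bit_prob :: "bool \<Rightarrow> nat \<Rightarrow> real" where
  "cond_bit_prob c s = (if s \<le> 3 then (if c then s / 3 else 1 - s / 3) else 0)"

fun cond_prob :: "bool list \<Rightarrow> nat list \<Rightarrow> real" where
  "cond_prob [] s = 1"
| "cond_prob (c # v) [] = 0"
| "cond_prob (c # v) (s # ss) = cond_bit_prob c s * cond_prob v ss"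

lemma cond_prob_nonneg: "0 \<le> cond_prob v s"
  by (induction v s rule: cond_prob.induct) (auto simp: cond_bit_prob_def)

lemma sum_cond_prob_le_1: "(\<Sum>v\<in>msgs k. cond_prob v s) \<le> 1"
proof (induction k arbitrary: s)
  case 0
  have "msgs 0 = {[]}" by (auto simp: msgs_def)
  then show ?case by simp
next
  case (Suc k)
  show ?case
  proof (cases s)
    case (Cons s0 ss)
    have "(\<Sum>v\<in>msgs (Suc k). cond_prob v s)
        = (cond_bit_prob True s0 + cond_bit_prob False s0) * (\<Sum>v\<in>msgs k. cond_prob v ss)"
      by (simp add: sum_msgs_Suc Cons sum_distrib_left distrib_right sum.distrib)
    also have "\<dots> \<le> 1 * 1"
      using Suc.IH by (intro mult_mono) (auto simp: cond_bit_prob_def sum_nonneg cond_prob_nonneg)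
    finally show ?thesis by simp
  qed (simp add: sum_msgs_Suc)
qed

fun coord_sum :: "(bool \<Rightarrow> bool \<Rightarrow> bool \<Rightarrow> real) \<Rightarrow> bool list \<Rightarrow> bool list \<Rightarrow> bool list \<Rightarrow> real" where
  "coord_sum \<phi> (a # x1) (b # x2) (c # x3) = \<phi> a b c + coord_sum \<phi> x1 x2 x3"
| "coord_sum \<phi> _ _ _ = 0"

lemma expect_coord_sum:
  "expect_uniform k (\<lambda>(x1, x2, x3). coord_sum \<phi> x1 x2 x3)
    = k * (\<Sum>a\<in>UNIV. \<Sum>b\<in>UNIV. \<Sum>c\<in>UNIV. \<phi> a b c) / 8"
proof -
  have "8 * (\<Sum>(x1, x2, x3)\<in>triples k. coord_sum \<phi> x1 x2 x3)
      = k * 8 ^ k * (\<Sum>a\<in>UNIV. \<Sum>b\<in>UNIV. \<Sum>c\<in>UNIV. \<phi> a b c)"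
  proof (induction k)
    case 0
    have "triples 0 = {([], [], [])}" by (auto simp: triples_def msgs_def)
    then show ?case by simp
  next
    case (Suc k)
    have "(\<Sum>(x1, x2, x3)\<in>triples k. \<phi> a b c + coord_sum \<phi> x1 x2 x3)
        = 8 ^ k * \<phi> a b c + (\<Sum>(x1, x2, x3)\<in>triples k. coord_sum \<phi> x1 x2 x3)" for a b c
      by (simp add: split_def sum.distrib card_triples)
    with Suc.IH show ?case
      by (simp add: sum_triples_Suc UNIV_bool algebra_simps)
  qed
  then show ?thesis by (simp add: expect_uniform_def card_triples field_simps)
qed

lemma cond_prob_sum_demand:
  assumes "length x1 = length x2" "length x2 = length x3"
  shows "cond_prob x3 (sum_demand x1 x2 x3)
    = exp (coord_sum (\<lambda>a b c. ln (cond_bit_prob c (of_bool a + of_bool b + of_bool c))) x1 x2 x3)"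
  using assms
proof (induction x1 x2 x3 rule: list_induct3[consumes 2])
  case (Cons a x1 b x2 c x3)
  have "0 < cond_bit_prob c (of_bool a + of_bool b + of_bool c)"
    by (cases a; cases b; cases c) (simp_all add: cond_bit_prob_def)
  with Cons show ?case by (simp add: exp_add)
qed simp

lemma expect_ln_cond_prob:
  "expect_uniform k (\<lambda>(x1, x2, x3). ln (cond_prob x3 (sum_demand x1 x2 x3)))
    = k * (ln 2 / 2 - 3/4 * ln 3)"
proof -
  have "expect_uniform k (\<lambda>(x1, x2, x3). ln (cond_prob x3 (sum_demand x1 x2 x3)))
      = expect_uniform k (\<lambda>(x1, x2, x3).
          coord_sum (\<lambda>a b c. ln (cond_bit_prob c (of_bool a + of_bool b + of_bool c))) x1 x2 x3)"
    by (rule expect_uniform_cong) (auto simp: triples_def msgs_def cond_prob_sum_demand)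
  then show ?thesis
    by (simp add: expect_coord_sum UNIV_bool cond_bit_prob_def ln_div field_simps)
qed

lemma injective_code_weight_le_1:
  fixes enc :: "bool list \<Rightarrow> bool list \<Rightarrow> bool list"
  assumes inj: "\<And>x3. x3 \<in> msgs k \<Longrightarrow> inj_on (\<lambda>x1. enc x1 x3) (msgs k)" and a: "0 < a" "a < 1/2"
  shows "(\<Sum>(x1, x2, x3)\<in>triples k. length_weight a (enc x1 x3) / 4 ^ k) \<le> 1"
proof -
  define g where "g = (\<lambda>(x1, x2 :: bool list, x3 :: bool list). (enc x1 x3, x2, x3))"
  define P where "P = (\<lambda>(z, x2 :: bool list, x3 :: bool list). length_weight a z / 4 ^ k)"
  define Z where "Z = {enc x1 x3 |x1 x3. x1 \<in> msgs k \<and> x3 \<in> msgs k}"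
  have "finite Z"
    unfolding Z_def by (rule finite_image_set2) (simp_all add: finite_msgs)
  have "inj_on g (triples k)"
    using inj by (auto simp: g_def inj_on_def triples_def)
  moreover have "g ` triples k \<subseteq> Z \<times> msgs k \<times> msgs k"
    by (auto simp: g_def Z_def triples_def)
  ultimately have "(\<Sum>(x1, x2, x3)\<in>triples k. length_weight a (enc x1 x3) / 4 ^ k)
      \<le> sum P (Z \<times> msgs k \<times> msgs k)"
    using sum_comp_inj_le[of g "triples k" "Z \<times> msgs k \<times> msgs k" P] \<open>finite Z\<close>
      length_weight_pos[OF a]
    by (simp add: finite_msgs P_def g_def split_def less_imp_le)
  also have "\<dots> = (\<Sum>z\<in>Z. length_weight a z) * (2 ^ k * 2 ^ k / 4 ^ k)"
    by (simp add: P_def sum.cartesian_product[symmetric] card_msgs card_cartesian_product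
        sum_divide_distrib sum_distrib_right mult_ac)
  also have "\<dots> \<le> 1"
    using sum_length_weight_le_1[OF \<open>finite Z\<close> a] by (simp flip: power_mult_distrib)
  finally show ?thesis .
qed

lemma injective_code_converse:
  fixes enc :: "bool list \<Rightarrow> bool list \<Rightarrow> bool list"
  assumes inj: "\<And>x3. x3 \<in> msgs k \<Longrightarrow> inj_on (\<lambda>x1. enc x1 x3) (msgs k)" and a: "0 < a" "a < 1/2"
  shows "k * ln 2 + ln (1 - 2 * a)
    \<le> - ln a * expect_uniform k (\<lambda>(x1, x2, x3). real (length (enc x1 x3)))"
proof -
  define L where "L = (\<lambda>(x1, x2 :: bool list, x3). real (length (enc x1 x3)))"
  define Q where "Q = (\<lambda>(x1, x2 :: bool list, x3). length_weight a (enc x1 x3) / 4 ^ k)"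
  have "3 * real k * ln 2 \<le> expect_uniform k (\<lambda>x. - ln (Q x))"
    using injective_code_weight_le_1[OF inj a] a
    by (intro uniform_entropy_le_expect_neg_ln) (auto simp: Q_def length_weight_pos)
  also have "\<dots> = expect_uniform k (\<lambda>x. 2 * k * ln 2 - ln (1 - 2 * a) + - ln a * L x)"
  proof (rule expect_uniform_cong)
    have "ln (4 :: real) = 2 * ln 2" using ln_realpow[of 2 2] by simp
    then have "ln ((4 :: real) ^ k) = 2 * k * ln 2" by (simp add: ln_realpow)
    then show "- ln (Q x) = 2 * k * ln 2 - ln (1 - 2 * a) + - ln a * L x" for x
      using a length_weight_pos[OF a, THEN less_imp_neq]
      by (simp add: Q_def L_def split_def ln_div ln_length_weight)
  qed
  also have "\<dots> = 2 * k * ln 2 - ln (1 - 2 * a) + - ln a * expect_uniform k L"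
    by (simp only: expect_uniform_add expect_uniform_cmult expect_uniform_const)
  finally show ?thesis by (simp add: L_def)
qed

(* The decoder output dec Z1 Z2 is the demand vector, so this weight is a function of (Z1, Z2, X3),
   an injective image of the message triple. *)
lemma zero_error_code_weight_le_1:
  assumes code: "zero_error_code k e31 e32 e1 e2 dec" and a: "0 < a" "a < 1/2"
  shows "(\<Sum>(x1, x2, x3)\<in>triples k. length_weight a (e1 x1 (e31 x3))
      * length_weight a (e2 x2 (e32 x3)) * cond_prob x3 (sum_demand x1 x2 x3)) \<le> 1"
proof -
  define g where "g = (\<lambda>(x1, x2, x3). (e1 x1 (e31 x3), e2 x2 (e32 x3), x3))"
  define P where
    "P = (\<lambda>(z1, z2, v). length_weight a z1 * length_weight a z2 * cond_prob v (dec z1 z2))"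
  define Z1 where "Z1 = {e1 x1 (e31 x3) |x1 x3. x1 \<in> msgs k \<and> x3 \<in> msgs k}"
  define Z2 where "Z2 = {e2 x2 (e32 x3) |x2 x3. x2 \<in> msgs k \<and> x3 \<in> msgs k}"
  have fin: "finite Z1" "finite Z2"
    unfolding Z1_def Z2_def by (rule finite_image_set2; simp add: finite_msgs)+
  have w_nonneg: "0 \<le> length_weight a z" for z using length_weight_pos[OF a] by (rule less_imp_le)
  have "inj_on g (triples k)"
    using zero_error_code_inj1[OF code] zero_error_code_inj2[OF code]
    by (auto simp: g_def inj_on_def triples_def)
  moreover have "g ` triples k \<subseteq> Z1 \<times> Z2 \<times> msgs k"
    by (auto simp: g_def Z1_def Z2_def triples_def)
  ultimately have "(\<Sum>x\<in>triples k. P (g x)) \<le> sum P (Z1 \<times> Z2 \<times> msgs k)"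
    using fin by (intro sum_comp_inj_le) (auto simp: finite_msgs P_def w_nonneg cond_prob_nonneg)
  moreover have "(\<Sum>x\<in>triples k. P (g x))
      = (\<Sum>(x1, x2, x3)\<in>triples k. length_weight a (e1 x1 (e31 x3))
          * length_weight a (e2 x2 (e32 x3)) * cond_prob x3 (sum_demand x1 x2 x3))"
    using code by (intro sum.cong) (auto simp: P_def g_def triples_def zero_error_code_iff)
  moreover have "sum P (Z1 \<times> Z2 \<times> msgs k) = (\<Sum>z1\<in>Z1. \<Sum>z2\<in>Z2.
      length_weight a z1 * length_weight a z2 * (\<Sum>v\<in>msgs k. cond_prob v (dec z1 z2)))"
    by (simp add: P_def sum.cartesian_product[symmetric] sum_distrib_left)
  moreover have "\<dots> \<le> (\<Sum>z1\<in>Z1. \<Sum>z2\<in>Z2. length_weight a z1 * length_weight a z2)"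
    by (intro sum_mono mult_right_le_one_le sum_cond_prob_le_1)
      (auto simp: w_nonneg sum_nonneg cond_prob_nonneg)
  moreover have "\<dots> = (\<Sum>z\<in>Z1. length_weight a z) * (\<Sum>z\<in>Z2. length_weight a z)"
    by (simp add: sum_product)
  moreover have "\<dots> \<le> 1"
    using sum_length_weight_le_1[OF fin(1) a] sum_length_weight_le_1[OF fin(2) a]
    by (intro mult_le_one) (auto simp: sum_nonneg w_nonneg)
  ultimately show ?thesis by linarith
qed

lemma sum_rate_converse:
  assumes code: "zero_error_code k e31 e32 e1 e2 dec" and a: "0 < a" "a < 1/2"
  shows "k * (7/2 * ln 2 - 3/4 * ln 3) + 2 * ln (1 - 2 * a)
    \<le> - ln a * (expect_uniform k (\<lambda>(x1, x2, x3). real (length (e1 x1 (e31 x3))))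
              + expect_uniform k (\<lambda>(x1, x2, x3). real (length (e2 x2 (e32 x3)))))"
proof -
  define L1 where "L1 = (\<lambda>(x1, x2 :: bool list, x3). real (length (e1 x1 (e31 x3))))"
  define L2 where "L2 = (\<lambda>(x1 :: bool list, x2, x3). real (length (e2 x2 (e32 x3))))"
  define LC where "LC = (\<lambda>(x1, x2, x3). ln (cond_prob x3 (sum_demand x1 x2 x3)))"
  define Q where "Q = (\<lambda>(x1, x2, x3). length_weight a (e1 x1 (e31 x3))
      * length_weight a (e2 x2 (e32 x3)) * cond_prob x3 (sum_demand x1 x2 x3))"
  have cond_pos: "0 < cond_prob x3 (sum_demand x1 x2 x3)" if "(x1, x2, x3) \<in> triples k" for x1 x2 x3
    using that by (auto simp: triples_def msgs_def cond_prob_sum_demand)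
  have "3 * real k * ln 2 \<le> expect_uniform k (\<lambda>x. - ln (Q x))"
    using zero_error_code_weight_le_1[OF code a] length_weight_pos[OF a] cond_pos
    by (intro uniform_entropy_le_expect_neg_ln) (auto simp: Q_def)
  also have "\<dots>
      = expect_uniform k (\<lambda>x. - 2 * ln (1 - 2 * a) + (- ln a * L1 x + - ln a * L2 x) - LC x)"
  proof (rule expect_uniform_cong)
    fix x assume "x \<in> triples k"
    moreover obtain x1 x2 x3 where x: "x = (x1, x2, x3)" by (rule prod_cases3)
    ultimately have "cond_prob x3 (sum_demand x1 x2 x3) \<noteq> 0" using cond_pos by force
    then show "- ln (Q x) = - 2 * ln (1 - 2 * a) + (- ln a * L1 x + - ln a * L2 x) - LC x"
      using x a length_weight_pos[OF a, THEN less_imp_neq]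
      by (simp add: Q_def L1_def L2_def LC_def ln_mult ln_length_weight algebra_simps)
  qed
  also have "\<dots> = - 2 * ln (1 - 2 * a)
      + (- ln a * expect_uniform k L1 + - ln a * expect_uniform k L2) - k * (ln 2 / 2 - 3/4 * ln 3)"
    unfolding expect_uniform_diff expect_uniform_add expect_uniform_cmult expect_uniform_const
      LC_def expect_ln_cond_prob ..
  finally show ?thesis by (simp add: L1_def L2_def algebra_simps)
qed

(* m ln(1 - 2a) is the bounded price of not being prefix-free: it vanishes after division by k,
   and then a tends to 1/2. *)
lemma rate_ge_of_length_bounds:
  fixes B R m :: real
  assumes "0 \<le> m"
    and bounds: "\<And>\<epsilon> K. 0 < \<epsilon> \<Longrightarrow> \<exists>k::nat\<ge>K. \<exists>L. L \<le> k * (R + \<epsilon>) \<and>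
      (\<forall>a. 0 < a \<longrightarrow> a < 1/2 \<longrightarrow> k * B * ln 2 + m * ln (1 - 2 * a) \<le> - ln a * L)"
  shows "B \<le> R"
proof -
  have fixed_a_bound: "B * ln 2 \<le> - ln a * R" if a: "0 < a" "a < 1/2" for a
  proof (rule field_le_epsilon)
    fix \<delta> :: real assume "0 < \<delta>"
    define b where "b = - ln a"
    define c where "c = - m * ln (1 - 2 * a)"
    have "0 < b" using a by (simp add: b_def)
    have "0 \<le> c" using a \<open>0 \<le> m\<close> by (simp add: c_def mult_nonneg_nonpos)
    have "0 < \<delta> / (2 * b)" using \<open>0 < \<delta>\<close> \<open>0 < b\<close> by simp
    then obtain k :: nat and L
      where k: "nat \<lceil>2 * c / \<delta>\<rceil> + 1 \<le> k" and L: "L \<le> k * (R + \<delta> / (2 * b))"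
      and "\<forall>a. 0 < a \<longrightarrow> a < 1/2 \<longrightarrow> k * B * ln 2 + m * ln (1 - 2 * a) \<le> - ln a * L"
      using bounds by blast
    with a have bound: "k * B * ln 2 - c \<le> b * L" by (simp add: b_def c_def)
    have "0 < real k" using k by simp
    have "2 * c / \<delta> \<le> k"
      using real_nat_ceiling_ge[of "2 * c / \<delta>"] k by (simp flip: of_nat_le_iff)
    then have "c \<le> k * (\<delta> / 2)" using \<open>0 < \<delta>\<close> by (simp add: field_simps)
    moreover have "b * L \<le> b * (k * (R + \<delta> / (2 * b)))"
      using L \<open>0 < b\<close> by (simp add: mult_left_mono)
    moreover have "\<dots> = k * (b * R + \<delta> / 2)"
      using \<open>0 < b\<close> by (simp add: field_simps)
    ultimately have "k * (B * ln 2) \<le> k * (b * R + \<delta>)"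
      using bound by (simp add: algebra_simps)
    then show "B * ln 2 \<le> - ln a * R + \<delta>"
      using \<open>0 < real k\<close> by (simp add: b_def)
  qed
  have "B * ln 2 \<le> ln 2 * R"
  proof (rule tendsto_lowerbound)
    have "((\<lambda>a. - ln a * R) \<longlongrightarrow> - ln (1/2) * R) (at_left (1/2))"
      by (intro tendsto_intros) auto
    then show "((\<lambda>a. - ln a * R) \<longlongrightarrow> ln 2 * R) (at_left (1/2))"
      by (simp add: ln_div)
    have "\<forall>\<^sub>F a in at_left (1/2). a \<in> {0 <..< 1/2 :: real}"
      by (rule eventually_at_left_real) simp
    then show "\<forall>\<^sub>F a in at_left (1/2). B * ln 2 \<le> - ln a * R"
      by eventually_elim (rule fixed_a_bound; simp)
  qed simp
  then show ?thesis by simp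
qed

lemma admissible_rate1_ge_1:
  assumes "admissible R31 R32 R1 R2"
  shows "1 \<le> R1"
proof (rule rate_ge_of_length_bounds[where m = 1])
  fix \<epsilon> :: real and K :: nat assume "0 < \<epsilon>"
  with assms obtain k e31 e32 e1 e2 dec
    where "K \<le> k" and code: "zero_error_code k e31 e32 e1 e2 dec"
    and "expect_uniform k (\<lambda>(x1, x2, x3). real (length (e1 x1 (e31 x3)))) \<le> k * (R1 + \<epsilon>)"
    and "expect_uniform k (\<lambda>(x1, x2, x3). real (length (e2 x2 (e32 x3)))) \<le> k * (R2 + \<epsilon>)"
    by (rule admissibleD)
  with injective_code_converse[where enc = "\<lambda>x1 x3. e1 x1 (e31 x3)",
      OF zero_error_code_inj1[OF code]]
  show "\<exists>k\<ge>K. \<exists>L. L \<le> k * (R1 + \<epsilon>) \<and>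
      (\<forall>a. 0 < a \<longrightarrow> a < 1/2 \<longrightarrow> real k * 1 * ln 2 + 1 * ln (1 - 2 * a) \<le> - ln a * L)"
    by auto
qed simp

lemma admissible_sum_rate_ge:
  assumes "admissible R31 R32 R1 R2"
  shows "7/2 - 3/4 * log 2 3 \<le> R1 + R2"
proof (rule rate_ge_of_length_bounds[where m = 2])
  fix \<epsilon> :: real and K :: nat assume "0 < \<epsilon>"
  then have "0 < \<epsilon> / 2" by simp
  with assms obtain k e31 e32 e1 e2 dec
    where "K \<le> k" and code: "zero_error_code k e31 e32 e1 e2 dec"
    and E1: "expect_uniform k (\<lambda>(x1, x2, x3). real (length (e1 x1 (e31 x3)))) \<le> k * (R1 + \<epsilon> / 2)"
    and E2: "expect_uniform k (\<lambda>(x1, x2, x3). real (length (e2 x2 (e32 x3)))) \<le> k * (R2 + \<epsilon> / 2)"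
    by (rule admissibleD)
  define E where "E = expect_uniform k (\<lambda>(x1, x2, x3). real (length (e1 x1 (e31 x3))))
      + expect_uniform k (\<lambda>(x1, x2, x3). real (length (e2 x2 (e32 x3))))"
  have "E \<le> k * (R1 + R2 + \<epsilon>)"
    using add_mono[OF E1 E2] by (simp add: E_def algebra_simps)
  moreover have "(7/2 - 3/4 * log 2 3) * ln 2 = 7/2 * ln 2 - 3/4 * ln 3"
    by (simp add: log_def field_simps)
  with sum_rate_converse[OF code] have "\<forall>a. 0 < a \<longrightarrow> a < 1/2 \<longrightarrow>
      k * (7/2 - 3/4 * log 2 3) * ln 2 + 2 * ln (1 - 2 * a) \<le> - ln a * E"
    by (simp add: E_def mult.assoc)
  ultimately show "\<exists>k\<ge>K. \<exists>L. L \<le> k * (R1 + R2 + \<epsilon>) \<and>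
      (\<forall>a. 0 < a \<longrightarrow> a < 1/2 \<longrightarrow> k * (7/2 - 3/4 * log 2 3) * ln 2 + 2 * ln (1 - 2 * a) \<le> - ln a * L)"
    using \<open>K \<le> k\<close> by blast
qed simp

theorem mainTheorem5:
  assumes "admissible R31 R32 R1 R2"
  shows "R1 \<ge> 1 \<and> R2 \<ge> 1 \<and> (R1 + R2) / 2 \<ge> (0.5 + 3 - 0.75 * log 2 3) / 2"
proof -
  have "1 \<le> R1" using assms by (rule admissible_rate1_ge_1)
  moreover have "1 \<le> R2" using admissible_swap[OF assms] by (rule admissible_rate1_ge_1)
  moreover have "7/2 - 3/4 * log 2 3 \<le> R1 + R2" using assms by (rule admissible_sum_rate_ge)
  ultimately show ?thesis by simp
qed

end
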